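(* Consider the four-oscillator system below with $\alpha_\mathrm{s}=\frac{\pi}{2}$, $\alpha_\mathrm{n}=0$ and arbitrary $A\in\mathbb{R}$, $\omega\in\mathbb{R}$. Then the function $$H^{(-1,0)}(\psi_1,\psi_3)=\cot\!\left(\frac{\psi_1+\psi_3}{4}\right)\tan\!\left(\frac{\psi_1-\psi_3}{4}\right)$$ (with $\psi_1,\psi_3$ the real-valued phase differences of a solution) is constant along every solution on any time interval on which it is defined (i.e. on which $(\psi_1+\psi_3)/4\notin\pi\mathbb{Z}$ and $(\psi_1-\psi_3)/4\notin \pi/2+\pi\mathbb{Z}$).
   Context: Network of $M=2$ populations of $N=2$ phase oscillators with phases $\theta_{\sigma,k}(t)\in\mathbb{R}$ (population $\sigma\in\{1,2\}$, oscillator $k\in\{1,2\}$), evolving by $$\dot\theta_{\sigma,k}=\omega+\frac{K_\mathrm{s}}{4}\sum_{j=1}^{2}\sin(\theta_{\sigma,j}-\theta_{\sigma,k}-\alpha_\mathrm{s})+\frac{K_\mathrm{n}}{4}\sum_{j=1}^{2}\sin(\theta_{\tau,j}-\theta_{\sigma,k}-\alpha_\mathrm{n}),$$ where $\tau$ denotes the population other than $\sigma$, $\omega\in\mathbb{R}$, $\alpha_\mathrm{s},\alpha_\mathrm{n}\in\mathbb{R}$ are phase lags, and the coupling strengths are parametrized by $A\in\mathbb{R}$ via $K_\mathrm{s}=(1+A)/2$, $K_\mathrm{n}=(1-A)/2$ (so $K_\mathrm{s}+K_\mathrm{n}=1$, $A=K_\mathrm{s}-K_\mathrm{n}$). The phase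 differences are $\psi_1=\theta_{1,1}-\theta_{1,2}$, $\psi_2=\theta_{1,2}-\theta_{2,1}$, $\psi_3=\theta_{2,1}-\theta_{2,2}$; they satisfy an autonomous ODE (the reduced system) since the right-hand side depends only on phase differences. *)

theory Defs
  imports "HOL-Analysis.Analysis"
begin

definition Ks :: "real \<Rightarrow> real" where "Ks A = (1 + A) / 2"
definition Kn :: "real \<Rightarrow> real" where "Kn A = (1 - A) / 2"

text \<open>Right-hand side of the network ODE. A state is x :: nat => nat => real,
  x sigma k being the phase of oscillator k in population sigma (sigma, k in {1,2}).
  The other population is 3 - sigma.\<close>
definition rhs :: "real \<Rightarrow> real \<Rightarrow> real \<Rightarrow> real \<Rightarrow> (nat \<Rightarrow> nat \<Rightarrow> real) \<Rightarrow> nat \<Rightarrow> nat \<Rightarrow> real" where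
  "rhs \<omega> A \<alpha>s \<alpha>n x \<sigma> k =
     \<omega> + Ks A / 4 * (\<Sum>j\<in>{1,2::nat}. sin (x \<sigma> j - x \<sigma> k - \<alpha>s))
       + Kn A / 4 * (\<Sum>j\<in>{1,2::nat}. sin (x (3 - \<sigma>) j - x \<sigma> k - \<alpha>n))"

definition psi1 :: "(nat \<Rightarrow> nat \<Rightarrow> real) \<Rightarrow> real" where "psi1 x = x 1 1 - x 1 2"
definition psi3 :: "(nat \<Rightarrow> nat \<Rightarrow> real) \<Rightarrow> real" where "psi3 x = x 2 1 - x 2 2"

definition Hm10 :: "real \<Rightarrow> real \<Rightarrow> real" where
  "Hm10 \<psi>1 \<psi>3 = cot ((\<psi>1 + \<psi>3) / 4) * tan ((\<psi>1 - \<psi>3) / 4)"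

end

theory Submission
  imports Defs
begin

text \<open>With \<open>u = (\<psi>\<^sub>1 + \<psi>\<^sub>3)/4\<close> and \<open>v = (\<psi>\<^sub>1 - \<psi>\<^sub>3)/4\<close>, the phase lag \<open>\<alpha>\<^sub>s = \<pi>/2\<close> makes the
  intra-population coupling symmetric, so it drops out of \<open>\<psi>\<^sub>1'\<close> and \<open>\<psi>\<^sub>3'\<close>, and sum-to-product
  formulas reduce the dynamics to \<open>u' = g sin (2u)\<close>, \<open>v' = g sin (2v)\<close> with one common factor
  \<open>g = -K\<^sub>n cos m / 4\<close>, where \<open>2m\<close> is the difference of the phase sums of the two
  populations. Then \<open>(cot u)' = -2g cot u\<close> and \<open>(tan v)' = 2g tan v\<close>, so the product
  \<open>cot u tan v\<close> has derivative zero.\<close>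

lemma cot_mul_tan_has_real_derivative_zero:
  fixes u v :: "real \<Rightarrow> real"
  assumes u: "(u has_real_derivative g * sin (2 * u t)) (at t within S)"
    and v: "(v has_real_derivative g * sin (2 * v t)) (at t within S)"
    and sin_u: "sin (u t) \<noteq> 0" and cos_v: "cos (v t) \<noteq> 0"
  shows "((\<lambda>s. cot (u s) * tan (v s)) has_real_derivative 0) (at t within S)"
proof -
  have cot: "((\<lambda>s. cot (u s)) has_real_derivative - 2 * g * cot (u t)) (at t within S)"
    using DERIV_chain2[OF DERIV_cot[OF sin_u] u]
    by (rule DERIV_cong) (use sin_u in \<open>simp add: sin_double cot_def power2_eq_square divide_simps\<close>)
  have tan: "((\<lambda>s. tan (v s)) has_real_derivative 2 * g * tan (v t)) (at t within S)"
    using DERIV_chain2[OF DERIV_tan[OF cos_v] v]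
    by (rule DERIV_cong) (use cos_v in \<open>simp add: sin_double tan_def power2_eq_square divide_simps\<close>)
  show ?thesis
    using DERIV_mult[OF cot tan] by (simp add: algebra_simps)
qed

lemma rhs_diff_phase_lag_pi_half:
  "rhs \<omega> A (pi / 2) 0 x \<sigma> 1 - rhs \<omega> A (pi / 2) 0 x \<sigma> 2 =
     Kn A / 4 * (sin (x (3 - \<sigma>) 1 - x \<sigma> 1) + sin (x (3 - \<sigma>) 2 - x \<sigma> 1)
               - sin (x (3 - \<sigma>) 1 - x \<sigma> 2) - sin (x (3 - \<sigma>) 2 - x \<sigma> 2))"
proof -
  have "sin (x \<sigma> 2 - x \<sigma> 1 - pi / 2) = sin (x \<sigma> 1 - x \<sigma> 2 - pi / 2)"
    unfolding sin_diff by (simp add: cos_minus[of "x \<sigma> 2 - x \<sigma> 1", simplified])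
  then show ?thesis
    unfolding rhs_def by (simp add: algebra_simps)
qed

lemma sin_pairs_add:
  fixes a b c d :: real
  shows "sin (c - a) + sin (d - a) - sin (c - b) - sin (d - b)
       + (sin (a - c) + sin (b - c) - sin (a - d) - sin (b - d))
       = - 4 * cos ((c + d - a - b) / 2) * sin (2 * ((a - b + (c - d)) / 4))"
proof -
  have "sin (d - a) + sin (b - c) = 2 * sin ((d - a + (b - c)) / 2) * cos ((d - a - (b - c)) / 2)"
    by (rule sin_plus_sin)
  moreover have "(d - a + (b - c)) / 2 = - (2 * ((a - b + (c - d)) / 4))"
    and "(d - a - (b - c)) / 2 = (c + d - a - b) / 2"
    by (simp_all add: field_simps)
  ultimately show ?thesis
    by (simp add: sin_diff cos_diff) (simp add: algebra_simps)
qed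

lemma sin_pairs_diff:
  fixes a b c d :: real
  shows "sin (c - a) + sin (d - a) - sin (c - b) - sin (d - b)
       - (sin (a - c) + sin (b - c) - sin (a - d) - sin (b - d))
       = - 4 * cos ((c + d - a - b) / 2) * sin (2 * ((a - b - (c - d)) / 4))"
proof -
  have "sin (c - a) - sin (d - b) = 2 * sin ((c - a - (d - b)) / 2) * cos ((c - a + (d - b)) / 2)"
    by (rule sin_diff_sin)
  moreover have "(c - a - (d - b)) / 2 = - (2 * ((a - b - (c - d)) / 4))"
    and "(c - a + (d - b)) / 2 = (c + d - a - b) / 2"
    by (simp_all add: field_simps)
  ultimately show ?thesis
    by (simp add: sin_diff cos_diff) (simp add: algebra_simps)
qed

lemma rhs_reduced_dynamics:
  fixes x :: "nat \<Rightarrow> nat \<Rightarrow> real" and A \<omega> :: real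
  defines "F \<equiv> rhs \<omega> A (pi / 2) 0 x"
    and "g \<equiv> - Kn A / 4 * cos ((x 2 1 + x 2 2 - x 1 1 - x 1 2) / 2)"
  shows "(F 1 1 - F 1 2 + (F 2 1 - F 2 2)) / 4 = g * sin (2 * ((psi1 x + psi3 x) / 4))"
    and "(F 1 1 - F 1 2 - (F 2 1 - F 2 2)) / 4 = g * sin (2 * ((psi1 x - psi3 x) / 4))"
proof -
  define a b c d where "a = x 1 1" and "b = x 1 2" and "c = x 2 1" and "d = x 2 2"
  define P where "P = sin (c - a) + sin (d - a) - sin (c - b) - sin (d - b)"
  define Q where "Q = sin (a - c) + sin (b - c) - sin (a - d) - sin (b - d)"
  have F: "F 1 1 - F 1 2 = Kn A / 4 * P" "F 2 1 - F 2 2 = Kn A / 4 * Q"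
    unfolding F_def rhs_diff_phase_lag_pi_half P_def Q_def a_def b_def c_def d_def by simp_all
  have psi: "psi1 x + psi3 x = a - b + (c - d)" "psi1 x - psi3 x = a - b - (c - d)"
    unfolding psi1_def psi3_def a_def b_def c_def d_def by simp_all
  have g: "g = - Kn A / 4 * cos ((c + d - a - b) / 2)"
    unfolding g_def a_def b_def c_def d_def ..
  have "(F 1 1 - F 1 2 + (F 2 1 - F 2 2)) / 4 = Kn A / 16 * (P + Q)"
    unfolding F by (simp add: field_simps)
  also have "\<dots> = g * sin (2 * ((psi1 x + psi3 x) / 4))"
    unfolding P_def Q_def sin_pairs_add psi g by simp
  finally show "(F 1 1 - F 1 2 + (F 2 1 - F 2 2)) / 4 = g * sin (2 * ((psi1 x + psi3 x) / 4))" .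
  have "(F 1 1 - F 1 2 - (F 2 1 - F 2 2)) / 4 = Kn A / 16 * (P - Q)"
    unfolding F by (simp add: field_simps)
  also have "\<dots> = g * sin (2 * ((psi1 x - psi3 x) / 4))"
    unfolding P_def Q_def sin_pairs_diff psi g by simp
  finally show "(F 1 1 - F 1 2 - (F 2 1 - F 2 2)) / 4 = g * sin (2 * ((psi1 x - psi3 x) / 4))" .
qed

theorem mainTheorem6:
  fixes \<theta> :: "real \<Rightarrow> nat \<Rightarrow> nat \<Rightarrow> real" and I :: "real set" and A \<omega> :: real
  assumes I: "is_interval I"
    and sol: "\<And>t \<sigma> k. t \<in> I \<Longrightarrow> \<sigma> \<in> {1,2} \<Longrightarrow> k \<in> {1,2} \<Longrightarrow>
        ((\<lambda>s. \<theta> s \<sigma> k) has_real_derivative rhs \<omega> A (pi / 2) 0 (\<theta> t) \<sigma> k) (at t within I)"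
    and def1: "\<And>t (n::int). t \<in> I \<Longrightarrow> (psi1 (\<theta> t) + psi3 (\<theta> t)) / 4 \<noteq> pi * of_int n"
    and def2: "\<And>t (n::int). t \<in> I \<Longrightarrow> (psi1 (\<theta> t) - psi3 (\<theta> t)) / 4 \<noteq> pi / 2 + pi * of_int n"
  shows "\<forall>s\<in>I. \<forall>t\<in>I. Hm10 (psi1 (\<theta> s)) (psi3 (\<theta> s)) = Hm10 (psi1 (\<theta> t)) (psi3 (\<theta> t))"
proof -
  define u where "u t = (psi1 (\<theta> t) + psi3 (\<theta> t)) / 4" for t
  define v where "v t = (psi1 (\<theta> t) - psi3 (\<theta> t)) / 4" for t
  define F where "F t = rhs \<omega> A (pi / 2) 0 (\<theta> t)" for t
  define g where "g t = - Kn A / 4 * cos ((\<theta> t 2 1 + \<theta> t 2 2 - \<theta> t 1 1 - \<theta> t 1 2) / 2)" for t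
  have "((\<lambda>t. cot (u t) * tan (v t)) has_real_derivative 0) (at t within I)" if t: "t \<in> I" for t
  proof (rule cot_mul_tan_has_real_derivative_zero)
    show "(u has_real_derivative g t * sin (2 * u t)) (at t within I)"
    proof (rule DERIV_cong)
      show "(u has_real_derivative (F t 1 1 - F t 1 2 + (F t 2 1 - F t 2 2)) / 4) (at t within I)"
        unfolding u_def F_def psi1_def psi3_def by (auto intro!: derivative_eq_intros sol t)
    qed (unfold F_def g_def u_def, rule rhs_reduced_dynamics)
    show "(v has_real_derivative g t * sin (2 * v t)) (at t within I)"
    proof (rule DERIV_cong)
      show "(v has_real_derivative (F t 1 1 - F t 1 2 - (F t 2 1 - F t 2 2)) / 4) (at t within I)"
        unfolding v_def F_def psi1_def psi3_def by (auto intro!: derivative_eq_intros sol t)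
    qed (unfold F_def g_def v_def, rule rhs_reduced_dynamics)
    show "sin (u t) \<noteq> 0"
      using def1[OF t] by (auto simp: u_def sin_zero_iff_int2 mult.commute)
    show "cos (v t) \<noteq> 0"
      using def2[OF t] by (auto simp: v_def cos_zero_iff_int2 mult.commute add.commute)
  qed
  then obtain C where "\<forall>t\<in>I. cot (u t) * tan (v t) = C"
    using has_field_derivative_zero_constant[OF is_interval_convex[OF I]] by blast
  then show ?thesis
    by (simp add: Hm10_def u_def v_def)
qed

end
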